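(* Let $m\ge2$, $n\ge1$, and let $\alpha:(\mathbb Z[1/m],+)\to U_n(\mathbb Z[1/m])$ be an injective group homomorphism, with image $H=\alpha(\mathbb Z[1/m])$. Then the isolator $I(H)=\{g\in U_n(\mathbb Z[1/m]): g^k\in H\text{ for some integer }k\ge1\}$ is an abelian subgroup of $U_n(\mathbb Z[1/m])$, and the quotient group $I(H)/H$ has finite exponent.
   Context: $U_n(\mathbb Z[1/m])$ denotes the group of upper triangular $n\times n$ matrices with entries in $\mathbb Z[1/m]$ and all diagonal entries equal to $1$. *)

theory Defs
  imports "Jordan_Normal_Form.Matrix" "HOL-Algebra.Group"
begin

definition Zinv :: "nat \<Rightarrow> rat set" where
  "Zinv m = {q. \<exists>a::int. \<exists>k::nat. q = of_int a / of_nat m ^ k}"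

definition Unitri :: "nat \<Rightarrow> nat \<Rightarrow> rat mat set" where
  "Unitri n m = {A \<in> carrier_mat n n.
      (\<forall>i<n. \<forall>j<n. A $$ (i,j) \<in> Zinv m) \<and>
      (\<forall>i<n. A $$ (i,i) = 1) \<and>
      (\<forall>i<n. \<forall>j<n. j < i \<longrightarrow> A $$ (i,j) = 0)}"

definition Ugroup :: "nat \<Rightarrow> nat \<Rightarrow> rat mat monoid" where
  "Ugroup n m = \<lparr>carrier = Unitri n m, mult = (*), one = 1\<^sub>m n\<rparr>"

definition Zadd :: "nat \<Rightarrow> rat monoid" where
  "Zadd m = \<lparr>carrier = Zinv m, mult = (+), one = 0\<rparr>"

definition isolator :: "nat \<Rightarrow> nat \<Rightarrow> rat mat set \<Rightarrow> rat mat set" where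
  "isolator n m H = {g \<in> Unitri n m. \<exists>k::nat. k \<ge> 1 \<and> g [^]\<^bsub>Ugroup n m\<^esub> k \<in> H}"

end

theory Submission
  imports Defs "Jordan_Normal_Form.Determinant"
begin

text \<open>Upper unitriangular matrices over \<open>\<rat>\<close> have unique roots: on the first superdiagonal
  where \<open>X\<close> and \<open>Y\<close> differ, \<open>X\<^sup>k - Y\<^sup>k = k (X - Y)\<close>. In a group with unique roots, if \<open>x\<^sup>k\<close>
  commutes with \<open>y\<close> then the conjugate \<open>y\<inverse> x y\<close> has the same \<open>k\<close>-th power as \<open>x\<close>, hence
  equals it; so the isolator of the abelian subgroup \<open>H\<close> is an abelian subgroup.

  For the exponent, every \<open>\<alpha> q\<close> agrees with \<open>1\<close> below the first superdiagonal on which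
  \<open>\<alpha> 1 \<noteq> 1\<close>, and on it a fixed entry of \<open>\<alpha> q - 1\<close> is \<open>q c\<close> with \<open>c = a / m\<^sup>j \<noteq> 0\<close>. If
  \<open>g\<^sup>k = \<alpha> q\<close>, the same entry \<open>\<gamma> \<in> \<int>[1/m]\<close> of \<open>g - 1\<close> satisfies \<open>k \<gamma> = q c\<close>. Then
  \<open>t = sgn a \<cdot> m\<^sup>j \<gamma> \<in> \<int>[1/m]\<close> has \<open>k t = |a| q\<close>, so \<open>g\<^bsup>|a|\<^esup>\<close> and \<open>\<alpha> t\<close> have the same
  \<open>k\<close>-th power and \<open>g\<^bsup>|a|\<^esup> = \<alpha> t \<in> H\<close>.\<close>


section \<open>The ring \<open>\<int>[1/m]\<close>\<close>

lemma Zinv_of_int [simp]: "of_int a \<in> Zinv m"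
  unfolding Zinv_def by (rule CollectI, rule exI[of _ a], rule exI[of _ 0]) simp

lemma Zinv_of_nat [simp]: "of_nat k \<in> Zinv m"
  using Zinv_of_int[of "int k"] by simp

lemma Zinv_0 [simp]: "0 \<in> Zinv m" and Zinv_1 [simp]: "1 \<in> Zinv m"
  using Zinv_of_int[of 0] Zinv_of_int[of 1] by simp_all

lemma Zinv_add:
  assumes "m > 0" "x \<in> Zinv m" "y \<in> Zinv m"
  shows "x + y \<in> Zinv m"
proof -
  obtain a k where x: "x = of_int a / of_nat m ^ k" using assms unfolding Zinv_def by auto
  obtain b l where y: "y = of_int b / of_nat m ^ l" using assms unfolding Zinv_def by auto
  have "x + y = of_int (a * int m ^ l + b * int m ^ k) / of_nat m ^ (k + l)"
    using assms(1) unfolding x y by (simp add: field_simps power_add)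
  then show ?thesis unfolding Zinv_def by blast
qed

lemma Zinv_mult:
  assumes "x \<in> Zinv m" "y \<in> Zinv m"
  shows "x * y \<in> Zinv m"
proof -
  obtain a k where x: "x = of_int a / of_nat m ^ k" using assms unfolding Zinv_def by auto
  obtain b l where y: "y = of_int b / of_nat m ^ l" using assms unfolding Zinv_def by auto
  have "x * y = of_int (a * b) / of_nat m ^ (k + l)"
    unfolding x y by (simp add: power_add)
  then show ?thesis unfolding Zinv_def by blast
qed

lemma Zinv_uminus:
  assumes "x \<in> Zinv m"
  shows "- x \<in> Zinv m"
proof -
  obtain a k where "x = of_int a / of_nat m ^ k" using assms unfolding Zinv_def by auto
  then have "- x = of_int (- a) / of_nat m ^ k" by simp
  then show ?thesis unfolding Zinv_def by blast
qed

lemma Zinv_diff: "m > 0 \<Longrightarrow> x \<in> Zinv m \<Longrightarrow> y \<in> Zinv m \<Longrightarrow> x - y \<in> Zinv m"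
  using Zinv_add[of m x "- y"] Zinv_uminus[of y m] by simp

lemma Zinv_sum: "m > 0 \<Longrightarrow> (\<And>i. i \<in> S \<Longrightarrow> f i \<in> Zinv m) \<Longrightarrow> sum f S \<in> Zinv m"
  by (induction S rule: infinite_finite_induct) (simp_all add: Zinv_add)

lemma Zinv_clear_denominator:
  assumes "m > 0" "q \<in> Zinv m"
  obtains j a where "of_nat (m ^ j) * q = of_int a"
proof -
  obtain a j where "q = of_int a / of_nat m ^ j" using assms(2) unfolding Zinv_def by auto
  then have "of_nat (m ^ j) * q = of_int a" using assms(1) by simp
  then show thesis by (rule that)
qed

lemma additive_map_on_Zinv_linear:
  fixes f :: "rat \<Rightarrow> rat"
  assumes m: "m > 0"
    and add: "\<And>x y. x \<in> Zinv m \<Longrightarrow> y \<in> Zinv m \<Longrightarrow> f (x + y) = f x + f y"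
    and q: "q \<in> Zinv m"
  shows "f q = q * f 1"
proof -
  have scale_nat: "f (of_nat k * x) = of_nat k * f x" if "x \<in> Zinv m" for k x
  proof (induction k)
    case 0
    show ?case using add[of 0 0] by simp
  next
    case (Suc k)
    have "f (of_nat k * x + x) = f (of_nat k * x) + f x"
      using add Zinv_mult[of "of_nat k" m x] that by simp
    then show ?case using Suc by (simp add: algebra_simps)
  qed
  have scale_int: "f (of_int a) = of_int a * f 1" for a :: int
  proof (cases "a \<ge> 0")
    case True
    then show ?thesis using scale_nat[of 1 "nat a"] by simp
  next
    case False
    have "f (of_int a) + f (of_int (- a)) = f 0" using add[OF Zinv_of_int Zinv_of_int, of a "- a"] by simp
    then show ?thesis using scale_nat[of 1 "nat (- a)"] scale_nat[of 1 0] False by simp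
  qed
  obtain j a where a: "of_nat (m ^ j) * q = of_int a" using Zinv_clear_denominator[OF m q] .
  have "of_nat (m ^ j) * f q = f (of_int a)"
    using scale_nat[OF q, of "m ^ j"] a by simp
  also have "\<dots> = of_nat (m ^ j) * (q * f 1)"
    using scale_int[of a] a by simp
  finally show ?thesis using m by simp
qed

lemma Zadd_simps [simp]:
  "carrier (Zadd m) = Zinv m" "x \<otimes>\<^bsub>Zadd m\<^esub> y = x + y" "\<one>\<^bsub>Zadd m\<^esub> = 0"
  by (simp_all add: Zadd_def)

lemma Zadd_is_group: "m > 0 \<Longrightarrow> group (Zadd m)"
proof (rule groupI)
  fix x assume "x \<in> carrier (Zadd m)"
  then show "\<exists>y\<in>carrier (Zadd m). y \<otimes>\<^bsub>Zadd m\<^esub> x = \<one>\<^bsub>Zadd m\<^esub>"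
    using Zinv_uminus by (auto simp: Zadd_def intro!: bexI[of _ "- x"])
qed (auto simp: Zadd_def Zinv_add)

lemma Zadd_nat_pow: "x [^]\<^bsub>Zadd m\<^esub> k = of_nat k * x"
  by (induction k) (simp_all add: Zadd_def algebra_simps)

section \<open>Groups with unique roots\<close>

definition unique_roots :: "('a, 'b) monoid_scheme \<Rightarrow> bool" where
  "unique_roots G \<longleftrightarrow> (\<forall>x \<in> carrier G. \<forall>y \<in> carrier G. \<forall>k::nat.
     k > 0 \<longrightarrow> x [^]\<^bsub>G\<^esub> k = y [^]\<^bsub>G\<^esub> k \<longrightarrow> x = y)"

definition group_isolator :: "('a, 'b) monoid_scheme \<Rightarrow> 'a set \<Rightarrow> 'a set" where
  "group_isolator G H = {g \<in> carrier G. \<exists>k::nat. k \<ge> 1 \<and> g [^]\<^bsub>G\<^esub> k \<in> H}"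

context group
begin

lemma nat_pow_conj:
  assumes a: "a \<in> carrier G" and b: "b \<in> carrier G"
  shows "(inv b \<otimes> a \<otimes> b) [^] (k::nat) = inv b \<otimes> a [^] k \<otimes> b"
proof (induction k)
  case 0
  show ?case using b by simp
next
  case (Suc k)
  have cancel: "b \<otimes> (inv b \<otimes> x) = x" if "x \<in> carrier G" for x
    using b that by (simp add: m_assoc[symmetric])
  show ?case using Suc a b by (simp add: m_assoc cancel)
qed

lemma commute_of_nat_pow_commute:
  assumes roots: "unique_roots G" and a: "a \<in> carrier G" and b: "b \<in> carrier G" and k: "k > 0"
    and comm: "a [^] k \<otimes> b = b \<otimes> a [^] (k::nat)"
  shows "a \<otimes> b = b \<otimes> a"
proof -
  have "(inv b \<otimes> a \<otimes> b) [^] k = inv b \<otimes> (a [^] k \<otimes> b)"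
    using nat_pow_conj[OF a b] a b by (simp add: m_assoc)
  also have "\<dots> = a [^] k"
    using comm a b by (simp add: m_assoc[symmetric])
  finally have "inv b \<otimes> a \<otimes> b = a"
    using roots a b k unfolding unique_roots_def by simp
  then have "b \<otimes> (inv b \<otimes> a \<otimes> b) = b \<otimes> a" by simp
  then show ?thesis using a b by (simp add: m_assoc[symmetric])
qed

lemma group_isolator_commute:
  assumes roots: "unique_roots G" and comm: "\<forall>x \<in> H. \<forall>y \<in> H. x \<otimes> y = y \<otimes> x"
    and x: "x \<in> group_isolator G H" and y: "y \<in> group_isolator G H"
  shows "x \<otimes> y = y \<otimes> x"
proof -
  obtain k l :: nat where kl: "k > 0" "l > 0" "x [^] k \<in> H" "y [^] l \<in> H"
    and xy: "x \<in> carrier G" "y \<in> carrier G"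
    using x y unfolding group_isolator_def by (auto simp: Suc_le_eq)
  have "y [^] l \<otimes> x [^] k = x [^] k \<otimes> y [^] l" using comm kl by blast
  then have "y \<otimes> x [^] k = x [^] k \<otimes> y"
    using commute_of_nat_pow_commute[OF roots xy(2) nat_pow_closed[OF xy(1)] kl(2)] by simp
  then show ?thesis using commute_of_nat_pow_commute[OF roots xy kl(1)] by simp
qed

lemma group_isolator_subgroup:
  assumes roots: "unique_roots G" and H: "subgroup H G"
    and comm: "\<forall>x \<in> H. \<forall>y \<in> H. x \<otimes> y = y \<otimes> x"
  shows "subgroup (group_isolator G H) G"
proof (rule subgroupI)
  show "group_isolator G H \<subseteq> carrier G" unfolding group_isolator_def by auto
  show "group_isolator G H \<noteq> {}"
    using subgroup.one_closed[OF H] unfolding group_isolator_def by (auto intro!: exI[of _ 1])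
next
  fix a assume "a \<in> group_isolator G H"
  then obtain k :: nat where "k \<ge> 1" "a [^] k \<in> H" "a \<in> carrier G"
    unfolding group_isolator_def by auto
  then show "inv a \<in> group_isolator G H"
    using subgroup.m_inv_closed[OF H] unfolding group_isolator_def by (auto simp: nat_pow_inv)
next
  fix a b assume a: "a \<in> group_isolator G H" and b: "b \<in> group_isolator G H"
  obtain k l :: nat where kl: "k \<ge> 1" "l \<ge> 1" "a [^] k \<in> H" "b [^] l \<in> H"
    and ab: "a \<in> carrier G" "b \<in> carrier G"
    using a b unfolding group_isolator_def by auto
  have pow_closed: "x [^] (j::nat) \<in> H" if "x \<in> H" for x j
    using that by (induction j) (auto intro: subgroup.m_closed[OF H] subgroup.one_closed[OF H])
  have "(a \<otimes> b) [^] (k * l) = (a [^] k) [^] l \<otimes> (b [^] l) [^] k"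
    using pow_mult_distrib[OF group_isolator_commute[OF roots comm a b] ab]
    by (simp add: nat_pow_pow ab mult.commute)
  also have "\<dots> \<in> H"
    using subgroup.m_closed[OF H pow_closed[OF kl(3)] pow_closed[OF kl(4)]] .
  finally show "a \<otimes> b \<in> group_isolator G H"
    using kl ab unfolding group_isolator_def by (auto intro!: exI[of _ "k * l"])
qed

end

section \<open>Unitriangular matrices\<close>

definition unit_upper_triangular :: "nat \<Rightarrow> 'a::semiring_1 mat \<Rightarrow> bool" where
  "unit_upper_triangular n X \<longleftrightarrow> X \<in> carrier_mat n n \<and>
     (\<forall>i<n. X $$ (i,i) = 1) \<and> (\<forall>i<n. \<forall>j<i. X $$ (i,j) = 0)"

text \<open>Entries \<open>(i, j)\<close> with \<open>j < i + d\<close>; the \<open>0\<close>-th superdiagonal is the diagonal.\<close>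

definition agree_below_diag :: "nat \<Rightarrow> nat \<Rightarrow> 'a mat \<Rightarrow> 'a mat \<Rightarrow> bool" where
  "agree_below_diag n d X Y \<longleftrightarrow> (\<forall>i<n. \<forall>j<n. j < i + d \<longrightarrow> X $$ (i,j) = Y $$ (i,j))"

lemma unit_upper_triangular_one: "unit_upper_triangular n (1\<^sub>m n)"
  unfolding unit_upper_triangular_def by auto

lemma unit_upper_triangular_agree_below_diag_1:
  assumes "unit_upper_triangular n X" "unit_upper_triangular n Y"
  shows "agree_below_diag n 1 X Y"
  using assms unfolding unit_upper_triangular_def agree_below_diag_def
  by (metis less_Suc_eq Suc_eq_plus1)

lemma agree_below_diag_mono: "agree_below_diag n d X Y \<Longrightarrow> d' \<le> d \<Longrightarrow> agree_below_diag n d' X Y"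
  unfolding agree_below_diag_def by force

lemma agree_below_diag_full_imp_eq:
  "X \<in> carrier_mat n n \<Longrightarrow> Y \<in> carrier_mat n n \<Longrightarrow> agree_below_diag n n X Y \<Longrightarrow> X = Y"
  unfolding agree_below_diag_def by (intro eq_matI) auto

lemma mat_mult_entry:
  assumes "X \<in> carrier_mat n n" "Y \<in> carrier_mat n n" "i < n" "j < n"
  shows "(X * Y) $$ (i,j) = (\<Sum>l<n. X $$ (i,l) * Y $$ (l,j))"
  using assms by (simp add: scalar_prod_def lessThan_atLeast0)

lemma unit_upper_triangular_mult_entry:
  fixes X Y :: "'a::comm_ring_1 mat"
  assumes X: "unit_upper_triangular n X" and Y: "unit_upper_triangular n Y" and ij: "i < j" "j < n"
  shows "(X * Y) $$ (i,j) = X $$ (i,j) + Y $$ (i,j) + (\<Sum>l\<in>{i<..<j}. X $$ (i,l) * Y $$ (l,j))"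
proof -
  have c: "X \<in> carrier_mat n n" "Y \<in> carrier_mat n n"
    using X Y unfolding unit_upper_triangular_def by auto
  have "(X * Y) $$ (i,j) = (\<Sum>l<n. X $$ (i,l) * Y $$ (l,j))"
    using mat_mult_entry[OF c] ij by simp
  also have "\<dots> = (\<Sum>l\<in>{i..j}. X $$ (i,l) * Y $$ (l,j))"
    by (rule sum.mono_neutral_right) (use X Y ij in \<open>auto simp: unit_upper_triangular_def\<close>)
  also have "{i..j} = insert i (insert j {i<..<j})" using ij by auto
  finally show ?thesis using X Y ij by (simp add: unit_upper_triangular_def)
qed

lemma unit_upper_triangular_mult:
  fixes X Y :: "'a::comm_ring_1 mat"
  assumes X: "unit_upper_triangular n X" and Y: "unit_upper_triangular n Y"
  shows "unit_upper_triangular n (X * Y)"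
proof -
  have c: "X \<in> carrier_mat n n" "Y \<in> carrier_mat n n"
    using X Y unfolding unit_upper_triangular_def by auto
  have "(X * Y) $$ (i,j) = (if i = j then 1 else 0)" if ij: "j \<le> i" "i < n" for i j
  proof -
    have "X $$ (i,l) * Y $$ (l,j) = (if l = i then (if i = j then 1 else 0) else 0)" if "l < n" for l
    proof -
      consider "l < i" | "l = i" | "i < l" by linarith
      then show ?thesis using X Y ij \<open>l < n\<close> by cases (auto simp: unit_upper_triangular_def)
    qed
    then show ?thesis using mat_mult_entry[OF c, of i j] ij by simp
  qed
  then show ?thesis using c unfolding unit_upper_triangular_def by auto
qed

lemma unit_upper_triangular_pow:
  fixes X :: "'a::comm_ring_1 mat"
  assumes "unit_upper_triangular n X"
  shows "unit_upper_triangular n (X ^\<^sub>m k)"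
  using assms
  by (induction k) (auto simp: unit_upper_triangular_mult unit_upper_triangular_one
      unit_upper_triangular_def[of n X])

lemma agree_below_diag_mult:
  fixes X Y X' Y' :: "'a::comm_ring_1 mat"
  assumes u: "unit_upper_triangular n X" "unit_upper_triangular n Y"
    "unit_upper_triangular n X'" "unit_upper_triangular n Y'"
    and a: "agree_below_diag n d X X'" "agree_below_diag n d Y Y'"
  shows "agree_below_diag n d (X * Y) (X' * Y')"
    and "i + d < n \<Longrightarrow> (X * Y) $$ (i,i+d) - (X' * Y') $$ (i,i+d)
        = (X $$ (i,i+d) - X' $$ (i,i+d)) + (Y $$ (i,i+d) - Y' $$ (i,i+d))"
proof -
  have diff: "(X * Y) $$ (i,j) - (X' * Y') $$ (i,j) = (X $$ (i,j) - X' $$ (i,j)) + (Y $$ (i,j) - Y' $$ (i,j))"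
    if ij: "i \<le> j" "j < n" "j \<le> i + d" for i j
  proof (cases "i = j")
    case True
    then show ?thesis
      using u ij unit_upper_triangular_mult[OF u(1,2)] unit_upper_triangular_mult[OF u(3,4)]
      by (simp add: unit_upper_triangular_def)
  next
    case False
    have "X $$ (i,l) * Y $$ (l,j) = X' $$ (i,l) * Y' $$ (l,j)" if "l \<in> {i<..<j}" for l
      using a that ij unfolding agree_below_diag_def by auto
    then have "(\<Sum>l\<in>{i<..<j}. X $$ (i,l) * Y $$ (l,j)) = (\<Sum>l\<in>{i<..<j}. X' $$ (i,l) * Y' $$ (l,j))"
      by (rule sum.cong[OF refl])
    then show ?thesis
      using unit_upper_triangular_mult_entry[OF u(1,2)] unit_upper_triangular_mult_entry[OF u(3,4)]
        False ij by simp
  qed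
  show "agree_below_diag n d (X * Y) (X' * Y')"
    unfolding agree_below_diag_def
  proof (intro allI impI)
    fix i j assume ij: "i < n" "j < n" "j < i + d"
    show "(X * Y) $$ (i,j) = (X' * Y') $$ (i,j)"
    proof (cases "i \<le> j")
      case True
      then show ?thesis using diff[of i j] a ij unfolding agree_below_diag_def by simp
    next
      case False
      then show ?thesis using ij
        unit_upper_triangular_agree_below_diag_1[OF unit_upper_triangular_mult[OF u(1,2)]
          unit_upper_triangular_mult[OF u(3,4)]]
        unfolding agree_below_diag_def by simp
    qed
  qed
  show "i + d < n \<Longrightarrow> (X * Y) $$ (i,i+d) - (X' * Y') $$ (i,i+d)
        = (X $$ (i,i+d) - X' $$ (i,i+d)) + (Y $$ (i,i+d) - Y' $$ (i,i+d))"
    by (rule diff) auto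
qed

lemma agree_below_diag_pow:
  fixes X Y :: "'a::comm_ring_1 mat"
  assumes u: "unit_upper_triangular n X" "unit_upper_triangular n Y"
    and a: "agree_below_diag n d X Y"
  shows "agree_below_diag n d (X ^\<^sub>m k) (Y ^\<^sub>m k)"
    and "i + d < n \<Longrightarrow> (X ^\<^sub>m k) $$ (i,i+d) - (Y ^\<^sub>m k) $$ (i,i+d)
        = of_nat k * (X $$ (i,i+d) - Y $$ (i,i+d))"
proof -
  have "agree_below_diag n d (X ^\<^sub>m k) (Y ^\<^sub>m k) \<and> (i + d < n \<longrightarrow>
      (X ^\<^sub>m k) $$ (i,i+d) - (Y ^\<^sub>m k) $$ (i,i+d) = of_nat k * (X $$ (i,i+d) - Y $$ (i,i+d)))"
  proof (induction k)
    case 0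
    have "X ^\<^sub>m 0 = Y ^\<^sub>m 0"
      using u unfolding unit_upper_triangular_def by (metis carrier_matD(1) pow_mat.simps(1))
    then show ?case by (simp add: agree_below_diag_def)
  next
    case (Suc k)
    then have "agree_below_diag n d (X ^\<^sub>m k) (Y ^\<^sub>m k)" by blast
    note mult = agree_below_diag_mult[OF unit_upper_triangular_pow[OF u(1), of k] u(1)
        unit_upper_triangular_pow[OF u(2), of k] u(2) this a]
    have "(X ^\<^sub>m Suc k) $$ (i,i+d) - (Y ^\<^sub>m Suc k) $$ (i,i+d)
        = of_nat (Suc k) * (X $$ (i,i+d) - Y $$ (i,i+d))" if i: "i + d < n"
    proof -
      have "(X ^\<^sub>m Suc k) $$ (i,i+d) - (Y ^\<^sub>m Suc k) $$ (i,i+d)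
          = ((X ^\<^sub>m k) $$ (i,i+d) - (Y ^\<^sub>m k) $$ (i,i+d)) + (X $$ (i,i+d) - Y $$ (i,i+d))"
        using mult(2)[OF i] by simp
      also have "\<dots> = of_nat k * (X $$ (i,i+d) - Y $$ (i,i+d)) + (X $$ (i,i+d) - Y $$ (i,i+d))"
        using Suc i by simp
      finally show ?thesis by (simp add: algebra_simps)
    qed
    with mult(1) show ?case by simp
  qed
  then show "agree_below_diag n d (X ^\<^sub>m k) (Y ^\<^sub>m k)"
    and "i + d < n \<Longrightarrow> (X ^\<^sub>m k) $$ (i,i+d) - (Y ^\<^sub>m k) $$ (i,i+d)
        = of_nat k * (X $$ (i,i+d) - Y $$ (i,i+d))" by blast+
qed

lemma first_disagreement_below_diag:
  assumes u: "unit_upper_triangular n X" "unit_upper_triangular n Y"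
    and na: "\<not> agree_below_diag n d X Y"
  obtains d' i where "d' < d" "agree_below_diag n d' X Y" "i + d' < n" "X $$ (i,i+d') \<noteq> Y $$ (i,i+d')"
proof -
  let ?P = "\<lambda>d'. \<exists>i. i + d' < n \<and> X $$ (i,i+d') \<noteq> Y $$ (i,i+d')"
  obtain i j where ij: "i < n" "j < n" "j < i + d" "X $$ (i,j) \<noteq> Y $$ (i,j)"
    using na unfolding agree_below_diag_def by blast
  have "i \<le> j"
  proof (rule ccontr)
    assume "\<not> i \<le> j"
    then have "j < i + 1" by simp
    then show False
      using unit_upper_triangular_agree_below_diag_1[OF u] ij unfolding agree_below_diag_def by blast
  qed
  then have P: "?P (j - i)" using ij by (intro exI[of _ i]) simp
  let ?d = "LEAST d'. ?P d'"
  have "agree_below_diag n ?d X Y"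
    unfolding agree_below_diag_def
  proof (intro allI impI)
    fix a b assume ab: "a < n" "b < n" "b < a + ?d"
    show "X $$ (a,b) = Y $$ (a,b)"
    proof (cases "a \<le> b")
      case True
      then have "\<not> ?P (b - a)" using ab by (intro not_less_Least) auto
      then have "\<not> (a + (b - a) < n \<and> X $$ (a, a + (b - a)) \<noteq> Y $$ (a, a + (b - a)))" by blast
      then show ?thesis using True ab by simp
    next
      case False
      then show ?thesis using unit_upper_triangular_agree_below_diag_1[OF u] ab
        unfolding agree_below_diag_def by simp
    qed
  qed
  moreover have "?d < d" using Least_le[of ?P, OF P] ij \<open>i \<le> j\<close> by linarith
  ultimately show thesis using LeastI[of ?P, OF P] that by blast
qed

lemma agree_below_diag_of_pow:
  fixes X Y :: "'a::{idom, ring_char_0} mat"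
  assumes u: "unit_upper_triangular n X" "unit_upper_triangular n Y" and k: "k > 0"
    and a: "agree_below_diag n d (X ^\<^sub>m k) (Y ^\<^sub>m k)"
  shows "agree_below_diag n d X Y"
proof (rule ccontr)
  assume "\<not> agree_below_diag n d X Y"
  then obtain d' i where d': "d' < d" "agree_below_diag n d' X Y" "i + d' < n"
    and ne: "X $$ (i,i+d') \<noteq> Y $$ (i,i+d')"
    using first_disagreement_below_diag[OF u] by blast
  have "(X ^\<^sub>m k) $$ (i,i+d') = (Y ^\<^sub>m k) $$ (i,i+d')"
    using a d' unfolding agree_below_diag_def by auto
  then show False using agree_below_diag_pow(2)[OF u d'(2) d'(3), of k] k ne by simp
qed

lemma unit_upper_triangular_pow_eq_imp_eq:
  fixes X Y :: "'a::{idom, ring_char_0} mat"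
  assumes u: "unit_upper_triangular n X" "unit_upper_triangular n Y" and k: "k > 0"
    and eq: "X ^\<^sub>m k = Y ^\<^sub>m k"
  shows "X = Y"
proof (rule agree_below_diag_full_imp_eq)
  show "agree_below_diag n n X Y"
    using agree_below_diag_of_pow[OF u k, of n] eq unfolding agree_below_diag_def by simp
  show "X \<in> carrier_mat n n" "Y \<in> carrier_mat n n"
    using u unfolding unit_upper_triangular_def by auto
qed

lemma agree_below_diag_cancel_right:
  fixes X Y X' Y' :: "'a::comm_ring_1 mat"
  assumes u: "unit_upper_triangular n X" "unit_upper_triangular n Y"
    "unit_upper_triangular n X'" "unit_upper_triangular n Y'"
    and eq: "X * Y = X' * Y'" and a: "agree_below_diag n d Y Y'"
  shows "agree_below_diag n d X X'"
proof (rule ccontr)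
  assume "\<not> agree_below_diag n d X X'"
  then obtain d' i where d': "d' < d" "agree_below_diag n d' X X'" "i + d' < n"
    and ne: "X $$ (i,i+d') \<noteq> X' $$ (i,i+d')"
    using first_disagreement_below_diag[OF u(1,3)] by blast
  have a': "agree_below_diag n d' Y Y'" using agree_below_diag_mono[OF a] d'(1) by simp
  have "Y $$ (i,i+d') = Y' $$ (i,i+d')" using a d' unfolding agree_below_diag_def by auto
  then show False using agree_below_diag_mult(2)[OF u(1,2,3,4) d'(2) a' d'(3)] eq ne by simp
qed

lemma one_mat_pow_mat [simp]: "(1\<^sub>m n :: 'a::semiring_1 mat) ^\<^sub>m k = 1\<^sub>m n"
  by (induction k) simp_all

section \<open>The group \<open>U\<^sub>n(\<int>[1/m])\<close>\<close>

lemma unit_upper_triangular_adj_mat: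
  fixes X :: "'a::comm_ring_1 mat"
  assumes u: "unit_upper_triangular n X"
  shows "X * adj_mat X = 1\<^sub>m n" and "adj_mat X * X = 1\<^sub>m n"
proof -
  have c: "X \<in> carrier_mat n n" using u unfolding unit_upper_triangular_def by simp
  have "upper_triangular X" using u unfolding unit_upper_triangular_def by auto
  then have "det X = (\<Prod>i = 0..<n. X $$ (i,i))"
    using det_upper_triangular[OF _ c] c by (simp add: prod_list_diag_prod)
  also have "\<dots> = 1" using u unfolding unit_upper_triangular_def by simp
  moreover have "1 \<cdot>\<^sub>m 1\<^sub>m n = (1\<^sub>m n :: 'a mat)" by (rule eq_matI) auto
  ultimately show "X * adj_mat X = 1\<^sub>m n" and "adj_mat X * X = 1\<^sub>m n"
    using adj_mat[OF c] by simp_all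
qed

lemma Unitri_iff:
  "X \<in> Unitri n m \<longleftrightarrow> unit_upper_triangular n X \<and> (\<forall>i<n. \<forall>j<n. X $$ (i,j) \<in> Zinv m)"
  unfolding Unitri_def unit_upper_triangular_def by auto

lemma Unitri_one: "1\<^sub>m n \<in> Unitri n m"
  by (simp add: Unitri_iff unit_upper_triangular_one)

lemma Unitri_mult:
  assumes m: "m > 0" and X: "X \<in> Unitri n m" and Y: "Y \<in> Unitri n m"
  shows "X * Y \<in> Unitri n m"
proof -
  have c: "X \<in> carrier_mat n n" "Y \<in> carrier_mat n n"
    using X Y unfolding Unitri_iff unit_upper_triangular_def by auto
  have "(X * Y) $$ (i,j) \<in> Zinv m" if "i < n" "j < n" for i j
    unfolding mat_mult_entry[OF c that]
    using X Y that by (intro Zinv_sum[OF m] Zinv_mult) (auto simp: Unitri_iff)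
  then show ?thesis
    using X Y unit_upper_triangular_mult by (auto simp: Unitri_iff)
qed

lemma Unitri_adj_mat:
  assumes m: "m > 0" and X: "X \<in> Unitri n m"
  shows "adj_mat X \<in> Unitri n m"
proof -
  let ?Y = "adj_mat X"
  have u: "unit_upper_triangular n X" using X by (simp add: Unitri_iff)
  have c: "X \<in> carrier_mat n n" "?Y \<in> carrier_mat n n"
    using u adj_mat(1) unfolding unit_upper_triangular_def by auto
  have row: "?Y $$ (i,j) = (if i = j then 1 else 0) - (\<Sum>l\<in>{i<..<n}. X $$ (i,l) * ?Y $$ (l,j))"
    if ij: "i < n" "j < n" for i j
  proof -
    have "(if i = j then 1 else 0) = (\<Sum>l<n. X $$ (i,l) * ?Y $$ (l,j))"
      using unit_upper_triangular_adj_mat(1)[OF u] mat_mult_entry[OF c ij] ij by simp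
    also have "\<dots> = (\<Sum>l\<in>{i..<n}. X $$ (i,l) * ?Y $$ (l,j))"
      by (rule sum.mono_neutral_right) (use u ij in \<open>auto simp: unit_upper_triangular_def\<close>)
    also have "{i..<n} = insert i {i<..<n}" using ij by auto
    finally show ?thesis using u ij by (simp add: unit_upper_triangular_def)
  qed
  have "?Y $$ (i,j) \<in> Zinv m \<and> (j \<le> i \<longrightarrow> ?Y $$ (i,j) = (if i = j then 1 else 0))"
    if "i < n" "j < n" for i j
    using that
  proof (induction "n - i" arbitrary: i rule: less_induct)
    case less
    have IH: "?Y $$ (l,j) \<in> Zinv m \<and> (j \<le> l \<longrightarrow> ?Y $$ (l,j) = (if l = j then 1 else 0))"
      if "l \<in> {i<..<n}" for l
      using less that by auto
    have "?Y $$ (i,j) \<in> Zinv m"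
      unfolding row[OF less.prems]
      using X IH less.prems
      by (intro Zinv_diff[OF m] Zinv_sum[OF m] Zinv_mult) (auto simp: Unitri_iff)
    moreover have "?Y $$ (i,j) = (if i = j then 1 else 0)" if "j \<le> i"
      using row[OF less.prems] IH that by (simp add: sum.neutral)
    ultimately show ?case by blast
  qed
  then show ?thesis using c by (auto simp: Unitri_iff unit_upper_triangular_def)
qed

lemma Ugroup_is_group: "m > 0 \<Longrightarrow> group (Ugroup n m)"
proof (rule groupI)
  fix X Y Z
  assume "m > 0" and XYZ: "X \<in> carrier (Ugroup n m)" "Y \<in> carrier (Ugroup n m)" "Z \<in> carrier (Ugroup n m)"
  then have c: "X \<in> carrier_mat n n" "Y \<in> carrier_mat n n" "Z \<in> carrier_mat n n"
    by (auto simp: Ugroup_def Unitri_def)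
  show "X \<otimes>\<^bsub>Ugroup n m\<^esub> Y \<in> carrier (Ugroup n m)"
    using Unitri_mult \<open>m > 0\<close> XYZ by (simp add: Ugroup_def)
  show "X \<otimes>\<^bsub>Ugroup n m\<^esub> Y \<otimes>\<^bsub>Ugroup n m\<^esub> Z = X \<otimes>\<^bsub>Ugroup n m\<^esub> (Y \<otimes>\<^bsub>Ugroup n m\<^esub> Z)"
    using assoc_mult_mat[OF c] by (simp add: Ugroup_def)
  show "\<one>\<^bsub>Ugroup n m\<^esub> \<otimes>\<^bsub>Ugroup n m\<^esub> X = X"
    using c by (simp add: Ugroup_def)
  show "\<exists>Y\<in>carrier (Ugroup n m). Y \<otimes>\<^bsub>Ugroup n m\<^esub> X = \<one>\<^bsub>Ugroup n m\<^esub>"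
  proof
    show "adj_mat X \<in> carrier (Ugroup n m)"
      using Unitri_adj_mat[OF \<open>m > 0\<close>] XYZ by (simp add: Ugroup_def)
    show "adj_mat X \<otimes>\<^bsub>Ugroup n m\<^esub> X = \<one>\<^bsub>Ugroup n m\<^esub>"
      using unit_upper_triangular_adj_mat(2)[of n X] XYZ by (simp add: Ugroup_def Unitri_iff)
  qed
qed (simp add: Ugroup_def Unitri_one)

lemma Ugroup_carrier [simp]: "carrier (Ugroup n m) = Unitri n m"
  by (simp add: Ugroup_def)

lemma Ugroup_mult [simp]: "X \<otimes>\<^bsub>Ugroup n m\<^esub> Y = X * Y"
  by (simp add: Ugroup_def)

lemma Ugroup_nat_pow:
  assumes "X \<in> Unitri n m"
  shows "X [^]\<^bsub>Ugroup n m\<^esub> k = X ^\<^sub>m k"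
  using assms by (induction k) (auto simp: Ugroup_def Unitri_def)

lemma Ugroup_unique_roots: "unique_roots (Ugroup n m)"
  unfolding unique_roots_def
proof (intro ballI allI impI)
  fix X Y and k :: nat
  assume "X \<in> carrier (Ugroup n m)" "Y \<in> carrier (Ugroup n m)" "k > 0"
    and "X [^]\<^bsub>Ugroup n m\<^esub> k = Y [^]\<^bsub>Ugroup n m\<^esub> k"
  then show "X = Y"
    using unit_upper_triangular_pow_eq_imp_eq[of n X Y k] by (simp add: Ugroup_nat_pow Unitri_iff)
qed

lemma isolator_eq_group_isolator: "isolator n m H = group_isolator (Ugroup n m) H"
  by (simp add: isolator_def group_isolator_def Ugroup_def)

section \<open>Embeddings of \<open>\<int>[1/m]\<close>\<close>

locale Zinv_embedding =
  fixes m n :: nat and \<alpha> :: "rat \<Rightarrow> rat mat"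
  assumes m_pos: "m > 0"
    and \<alpha>_hom: "\<alpha> \<in> hom (Zadd m) (Ugroup n m)"
    and \<alpha>_inj: "inj_on \<alpha> (Zinv m)"
begin

sublocale group_hom "Zadd m" "Ugroup n m" \<alpha>
  by (simp add: group_hom_def group_hom_axioms_def Zadd_is_group Ugroup_is_group m_pos \<alpha>_hom)

lemma \<alpha>_closed: "q \<in> Zinv m \<Longrightarrow> \<alpha> q \<in> Unitri n m"
  using hom_closed[of q] by simp

lemma \<alpha>_add: "x \<in> Zinv m \<Longrightarrow> y \<in> Zinv m \<Longrightarrow> \<alpha> (x + y) = \<alpha> x * \<alpha> y"
  using hom_mult[of x y] by simp

lemma \<alpha>_zero: "\<alpha> 0 = 1\<^sub>m n"
  using hom_one by (simp add: Ugroup_def)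

lemma \<alpha>_of_nat_mult: "q \<in> Zinv m \<Longrightarrow> \<alpha> (of_nat k * q) = \<alpha> q [^]\<^bsub>Ugroup n m\<^esub> k"
  using hom_nat_pow[of q k] by (simp add: Zadd_nat_pow)

lemma image_subgroup: "subgroup (\<alpha> ` Zinv m) (Ugroup n m)"
  using img_is_subgroup by simp

lemma image_commute: "\<forall>x \<in> \<alpha> ` Zinv m. \<forall>y \<in> \<alpha> ` Zinv m. x \<otimes>\<^bsub>Ugroup n m\<^esub> y = y \<otimes>\<^bsub>Ugroup n m\<^esub> x"
proof (intro ballI)
  fix x y assume "x \<in> \<alpha> ` Zinv m" "y \<in> \<alpha> ` Zinv m"
  then obtain a b where "a \<in> Zinv m" "b \<in> Zinv m" "x = \<alpha> a" "y = \<alpha> b" by blast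
  then show "x \<otimes>\<^bsub>Ugroup n m\<^esub> y = y \<otimes>\<^bsub>Ugroup n m\<^esub> x"
    using \<alpha>_add[of a b] \<alpha>_add[of b a] by (simp add: add.commute)
qed

lemma leading_superdiagonal:
  obtains i d c where "i + d < n" "c \<noteq> 0" "c \<in> Zinv m"
    "\<And>q. q \<in> Zinv m \<Longrightarrow> agree_below_diag n d (\<alpha> q) (1\<^sub>m n) \<and>
       \<alpha> q $$ (i,i+d) - 1\<^sub>m n $$ (i,i+d) = q * c"
proof -
  have u: "unit_upper_triangular n (\<alpha> q)" if "q \<in> Zinv m" for q
    using \<alpha>_closed[OF that] by (simp add: Unitri_iff)
  note one = unit_upper_triangular_one[of n, where 'a = rat]
  have "\<alpha> 1 \<noteq> 1\<^sub>m n"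
    using inj_onD[OF \<alpha>_inj, of 1 0] \<alpha>_zero by auto
  moreover have "\<alpha> 1 \<in> carrier_mat n n" using \<alpha>_closed[of 1] by (simp add: Unitri_def)
  ultimately have "\<not> agree_below_diag n n (\<alpha> 1) (1\<^sub>m n)"
    using agree_below_diag_full_imp_eq[of "\<alpha> 1" n "1\<^sub>m n"] by auto
  then obtain d i where d: "agree_below_diag n d (\<alpha> 1) (1\<^sub>m n)" "i + d < n"
    and ne: "\<alpha> 1 $$ (i,i+d) \<noteq> 1\<^sub>m n $$ (i,i+d)"
    by (rule first_disagreement_below_diag[OF u[OF Zinv_1] one])
  define c where "c = \<alpha> 1 $$ (i,i+d) - 1\<^sub>m n $$ (i,i+d)"
  have nat: "agree_below_diag n d (\<alpha> (of_nat k)) (1\<^sub>m n)" for k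
    using agree_below_diag_pow(1)[OF u[of 1] one d(1), of k] \<alpha>_of_nat_mult[of 1 k] \<alpha>_closed[of 1]
    by (simp add: Ugroup_nat_pow)
  have int: "agree_below_diag n d (\<alpha> (of_int a)) (1\<^sub>m n)" for a
  proof (cases "a \<ge> 0")
    case True
    then show ?thesis using nat[of "nat a"] by simp
  next
    case False
    have "\<alpha> (of_int a) * \<alpha> (of_int (- a)) = 1\<^sub>m n"
      using \<alpha>_add[OF Zinv_of_int Zinv_of_int, of a "- a"] \<alpha>_zero by simp
    then have "\<alpha> (of_int a) * \<alpha> (of_nat (nat (- a))) = 1\<^sub>m n * 1\<^sub>m n"
      using False by simp
    then show ?thesis
      by (rule agree_below_diag_cancel_right[OF u[OF Zinv_of_int] u[OF Zinv_of_nat] one one _ nat])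
  qed
  have agree: "agree_below_diag n d (\<alpha> q) (1\<^sub>m n)" if q: "q \<in> Zinv m" for q
  proof -
    obtain j a where a: "of_nat (m ^ j) * q = of_int a" using Zinv_clear_denominator[OF m_pos q] .
    have "\<alpha> q ^\<^sub>m (m ^ j) = \<alpha> (of_int a)"
      using \<alpha>_of_nat_mult[OF q, of "m ^ j"] a \<alpha>_closed[OF q] by (simp add: Ugroup_nat_pow)
    then show ?thesis
      using agree_below_diag_of_pow[OF u[OF q] one, of "m ^ j" d] int[of a] m_pos by simp
  qed
  let ?f = "\<lambda>q. \<alpha> q $$ (i,i+d) - 1\<^sub>m n $$ (i,i+d)"
  have "?f (x + y) = ?f x + ?f y" if "x \<in> Zinv m" "y \<in> Zinv m" for x y
    using agree_below_diag_mult(2)[OF u[OF that(1)] u[OF that(2)] one one agree[OF that(1)]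
        agree[OF that(2)] d(2)] \<alpha>_add[OF that] by simp
  then have "?f q = q * c" if "q \<in> Zinv m" for q
    using additive_map_on_Zinv_linear[OF m_pos _ that, of ?f] unfolding c_def by blast
  moreover have "c \<noteq> 0" using ne unfolding c_def by simp
  moreover have "c \<in> Zinv m"
    using \<alpha>_closed[of 1] Unitri_one[of n m] d(2) m_pos unfolding c_def
    by (intro Zinv_diff) (auto simp: Unitri_iff)
  ultimately show thesis using that d(2) agree by blast
qed

context
  fixes i d c
  assumes id: "i + d < n"
    and lead: "\<And>q. q \<in> Zinv m \<Longrightarrow> agree_below_diag n d (\<alpha> q) (1\<^sub>m n) \<and>
       \<alpha> q $$ (i,i+d) - 1\<^sub>m n $$ (i,i+d) = q * c"
begin

lemma root_leading_entry:
  assumes gU: "g \<in> Unitri n m" and k: "k > 0" and q: "q \<in> Zinv m"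
    and gk: "g [^]\<^bsub>Ugroup n m\<^esub> k = \<alpha> q"
  shows "of_nat k * (g $$ (i,i+d) - 1\<^sub>m n $$ (i,i+d)) = q * c"
proof -
  have ug: "unit_upper_triangular n g" using gU by (simp add: Unitri_iff)
  have gk_mat: "g ^\<^sub>m k = \<alpha> q" using gk gU by (simp add: Ugroup_nat_pow)
  have "agree_below_diag n d g (1\<^sub>m n)"
    using agree_below_diag_of_pow[OF ug unit_upper_triangular_one, of k d] lead[OF q] gk_mat k
    by simp
  then show ?thesis
    using agree_below_diag_pow(2)[OF ug unit_upper_triangular_one _ id, of k] lead[OF q] gk_mat
    by simp
qed

lemma isolator_pow_mem_image:
  assumes a: "of_nat (m ^ j) * c = of_int a" and g: "g \<in> isolator n m (\<alpha> ` Zinv m)"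
  shows "g [^]\<^bsub>Ugroup n m\<^esub> nat \<bar>a\<bar> \<in> \<alpha> ` Zinv m"
proof -
  define e where "e = nat \<bar>a\<bar>"
  have gU: "g \<in> Unitri n m" and "\<exists>k::nat. k \<ge> 1 \<and> g [^]\<^bsub>Ugroup n m\<^esub> k \<in> \<alpha> ` Zinv m"
    using g unfolding isolator_def by auto
  then obtain k :: nat and q where k: "k > 0" and q: "q \<in> Zinv m"
    and gk: "g [^]\<^bsub>Ugroup n m\<^esub> k = \<alpha> q"
    by (auto simp: Suc_le_eq)
  define t where "t = of_int (sgn a) * of_nat (m ^ j) * (g $$ (i,i+d) - 1\<^sub>m n $$ (i,i+d))"
  have t: "t \<in> Zinv m"
    using gU Unitri_one[of n m] id m_pos Zinv_of_nat[of "m ^ j" m] unfolding t_def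
    by (intro Zinv_mult Zinv_diff) (auto simp: Unitri_iff)
  have "of_nat k * t
      = of_int (sgn a) * of_nat (m ^ j) * (of_nat k * (g $$ (i,i+d) - 1\<^sub>m n $$ (i,i+d)))"
    unfolding t_def by (simp only: ac_simps)
  also have "\<dots> = of_int (sgn a) * q * (of_nat (m ^ j) * c)"
    unfolding root_leading_entry[OF gU k q gk] by (simp only: ac_simps)
  also have "\<dots> = of_int (sgn a * a) * q"
    unfolding a by (simp add: ac_simps)
  also have "sgn a * a = int e"
    unfolding e_def by (simp add: abs_if sgn_if)
  finally have kt: "of_nat k * t = of_nat e * q" by simp
  have "(g [^]\<^bsub>Ugroup n m\<^esub> e) [^]\<^bsub>Ugroup n m\<^esub> k = (g [^]\<^bsub>Ugroup n m\<^esub> k) [^]\<^bsub>Ugroup n m\<^esub> e"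
    using gU by (simp add: H.nat_pow_pow mult.commute)
  also have "\<dots> = \<alpha> (of_nat k * t)"
    using gk kt \<alpha>_of_nat_mult[OF q, of e] by simp
  also have "\<dots> = \<alpha> t [^]\<^bsub>Ugroup n m\<^esub> k"
    by (rule \<alpha>_of_nat_mult[OF t])
  finally have "g [^]\<^bsub>Ugroup n m\<^esub> e = \<alpha> t"
    using Ugroup_unique_roots[of n m] H.nat_pow_closed[of g e] gU \<alpha>_closed[OF t] k
    unfolding unique_roots_def by simp
  then show ?thesis using t unfolding e_def by simp
qed

end

lemma isolator_exponent:
  "\<exists>e::nat. e \<ge> 1 \<and> (\<forall>g \<in> isolator n m (\<alpha> ` Zinv m). g [^]\<^bsub>Ugroup n m\<^esub> e \<in> \<alpha> ` Zinv m)"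
proof -
  obtain i d c where id: "i + d < n" and c: "c \<noteq> 0" "c \<in> Zinv m"
    and lead: "\<And>q. q \<in> Zinv m \<Longrightarrow> agree_below_diag n d (\<alpha> q) (1\<^sub>m n) \<and>
       \<alpha> q $$ (i,i+d) - 1\<^sub>m n $$ (i,i+d) = q * c"
    using leading_superdiagonal by blast
  obtain j a where a: "of_nat (m ^ j) * c = of_int a" using Zinv_clear_denominator[OF m_pos c(2)] .
  have "a \<noteq> 0" using a c(1) m_pos by auto
  then show ?thesis using isolator_pow_mem_image[OF id lead a] by (intro exI[of _ "nat \<bar>a\<bar>"]) auto
qed

lemma isolator_subgroup: "subgroup (isolator n m (\<alpha> ` Zinv m)) (Ugroup n m)"
  unfolding isolator_eq_group_isolator
  by (rule H.group_isolator_subgroup[OF Ugroup_unique_roots image_subgroup image_commute])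

lemma isolator_commute:
  "x \<in> isolator n m (\<alpha> ` Zinv m) \<Longrightarrow> y \<in> isolator n m (\<alpha> ` Zinv m) \<Longrightarrow> x * y = y * x"
  using H.group_isolator_commute[OF Ugroup_unique_roots image_commute]
  by (simp add: isolator_eq_group_isolator)

end

theorem lemma4p3:
  fixes m n :: nat and \<alpha> :: "rat \<Rightarrow> rat mat" and H :: "rat mat set"
  assumes "m \<ge> 2" and "n \<ge> 1"
    and "\<alpha> \<in> hom (Zadd m) (Ugroup n m)"
    and "inj_on \<alpha> (Zinv m)"
    and "H = \<alpha> ` Zinv m"
  shows "subgroup (isolator n m H) (Ugroup n m)
     \<and> (\<forall>x \<in> isolator n m H. \<forall>y \<in> isolator n m H. x * y = y * x)
     \<and> (\<exists>e::nat. e \<ge> 1 \<and> (\<forall>g \<in> isolator n m H. g [^]\<^bsub>Ugroup n m\<^esub> e \<in> H))"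
proof -
  interpret Zinv_embedding m n \<alpha>
    \<comment> \<open>only \<open>m > 0\<close> is used; \<open>n \<ge> 1\<close> already follows from the injectivity of \<open>\<alpha>\<close>\<close>
    using assms(1,3,4) by unfold_locales auto
  show ?thesis
    using isolator_subgroup isolator_commute isolator_exponent assms(5) by blast
qed

end
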